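(* Let $q\in(0,1)$, $\beta<1$ real, and $t,z\in\mathbb{C}$ with $|t|<|z|<1$. Let $\tau$ satisfy $\alpha(\tau+\tau^{-1})=\beta(z+z^{-1})$. (1) If $\alpha$ is real with $|\alpha|<q$, then \[ \sum_{n=0}^{\infty}\frac{(\beta;q)_n}{(\alpha;q)_n}p_n^{(\alpha,\beta)}(z+z^{-1};q)\,t^n=\frac{1-q^{-1}\alpha}{(1-zt)(1-z^{-1}t)}\,{}_3\phi_2\!\left(q,q\tau t,q\tau^{-1}t;qzt,qz^{-1}t;q,q^{-1}\alpha\right). \] (2) If $\alpha=q$, then \[ \sum_{n=0}^{\infty}\frac{(\beta;q)_n}{(q;q)_n}p_n^{(q,\beta)}(z+z^{-1};q)\,t^n=\frac{(q\tau t,q\tau^{-1}t;q)_\infty}{(zt,z^{-1}t;q)_\infty}. \]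
   Context: $(a;q)_n:=\prod_{j=0}^{n-1}(1-aq^j)$, $n\in\mathbb{N}_0\cup\{\infty\}$, $(a_1,\dots,a_r;q)_n:=\prod_i(a_i;q)_n$. The monic polynomials $p_n^{(\alpha,\beta)}(x;q)$ satisfy $p_{-1}=0$, $p_0=1$, $p_{n+1}(x)=xp_n(x)-\tilde\gamma_{n-1}\tilde\gamma_np_{n-1}(x)$ with $\tilde\gamma_n=(1-\alpha q^n)/(1-\beta q^n)$. ${}_3\phi_2(a_1,a_2,a_3;b_1,b_2;q,w)=\sum_{k\ge0}\frac{(a_1,a_2,a_3;q)_k}{(b_1,b_2,q;q)_k}w^k$. The dependence on $\tau$ is only through $\alpha(\tau+\tau^{-1})=\beta(z+z^{-1})$: e.g. $(q^{-1}\alpha)^k(q\tau t,q\tau^{-1}t;q)_k=\prod_{j=0}^{k-1}\bigl(q^{-1}\alpha(1+q^{2j+2}t^2)-q^jt\beta(z+z^{-1})\bigr)$, which also defines it for $\alpha=0$. *)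

theory Defs
  imports "HOL-Analysis.Analysis"
begin

definition qpoch :: "complex \<Rightarrow> real \<Rightarrow> nat \<Rightarrow> complex" where
  "qpoch a q n = (\<Prod>j<n. 1 - a * of_real (q ^ j))"

definition qpoch_inf :: "complex \<Rightarrow> real \<Rightarrow> complex" where
  "qpoch_inf a q = (\<Prod>j. 1 - a * of_real (q ^ j))"

definition gam :: "real \<Rightarrow> real \<Rightarrow> real \<Rightarrow> nat \<Rightarrow> real" where
  "gam \<alpha> \<beta> q n = (1 - \<alpha> * q ^ n) / (1 - \<beta> * q ^ n)"

text \<open>Monic polynomials p_n^(alpha,beta)(x;q): p_0 = 1, p_1 = x (since p_{-1} = 0),
  p_{n+1} = x p_n - gam_{n-1} gam_n p_{n-1}.\<close>
fun pab :: "real \<Rightarrow> real \<Rightarrow> real \<Rightarrow> nat \<Rightarrow> complex \<Rightarrow> complex" where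
  "pab \<alpha> \<beta> q 0 x = 1"
| "pab \<alpha> \<beta> q (Suc 0) x = x"
| "pab \<alpha> \<beta> q (Suc (Suc n)) x =
     x * pab \<alpha> \<beta> q (Suc n) x
     - of_real (gam \<alpha> \<beta> q n * gam \<alpha> \<beta> q (Suc n)) * pab \<alpha> \<beta> q n x"

text \<open>The factor (q^{-1} alpha)^k (q tau t, q tau^{-1} t; q)_k, written (as in the paper)
  through alpha(tau + tau^{-1}) = beta(z + z^{-1}), which also defines it for alpha = 0.\<close>
definition tau_poch :: "real \<Rightarrow> real \<Rightarrow> real \<Rightarrow> complex \<Rightarrow> complex \<Rightarrow> nat \<Rightarrow> complex" where
  "tau_poch \<alpha> \<beta> q z t k =
     (\<Prod>j<k. of_real (\<alpha> / q) * (1 + of_real (q ^ (2*j+2)) * t^2)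
              - of_real (q ^ j) * t * of_real \<beta> * (z + 1/z))"

definition phi32_tau :: "real \<Rightarrow> real \<Rightarrow> real \<Rightarrow> complex \<Rightarrow> complex \<Rightarrow> complex" where
  "phi32_tau \<alpha> \<beta> q z t =
     (\<Sum>k. qpoch (of_real q) q k * tau_poch \<alpha> \<beta> q z t k
           / (qpoch (of_real q * z * t) q k * qpoch (of_real q * t / z) q k * qpoch (of_real q) q k))"

end

theory Submission
  imports Defs
begin

text \<open>Write P n = (beta;q)_n / (alpha;q)_n * p_n(z + 1/z) and F t = (SUM n. P n * t^n).
  After this rescaling the three-term recurrence becomes
  P (n+2) = (z + 1/z) d (n+1) P (n+1) - P n with d n = (1 - beta q^n) / (1 - alpha q^n) = 1 + O(q^n),
  a summable perturbation of the recurrence solved by z^n and z^-n. Hence P n = O(|z|^-n), and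
  F converges for |t| < |z|. Coefficientwise the recurrence is the q-difference equation
  den t * F t = 1 - alpha/q + num t * F (q t), where den t = (1 - z t)(1 - t/z) and
  num t = (alpha/q)(1 + q^2 t^2) - beta (z + 1/z) t, which is (alpha/q)(1 - q tau t)(1 - q t/tau)
  when alpha (tau + 1/tau) = beta (z + 1/z). Iterating it K times writes F t as the K-th partial
  sum of the 3phi2 series plus the remainder (PROD j<K. num (q^j t) / den (q^j t)) * F (q^K t).
  For |alpha| < q the factors tend to alpha/q, so the remainder tends to 0. For alpha = q the
  constant term 1 - alpha/q vanishes, F t equals the remainder, and the remainder converges to
  the ratio of infinite products.\<close>

lemma qpoch_Suc: "qpoch a q (Suc n) = qpoch a q n * (1 - a * of_real (q ^ n))"
  by (simp add: qpoch_def)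

lemma qpoch_inf_convergent_prod:
  fixes a :: complex and q :: real
  assumes "\<bar>q\<bar> < 1"
  shows "convergent_prod (\<lambda>j. 1 - a * of_real (q ^ j))"
proof -
  have "summable (\<lambda>j. norm ((1 - a * of_real (q ^ j)) - 1))"
    using assms by (simp add: norm_mult norm_power summable_geometric)
  then show ?thesis
    by (intro abs_convergent_prod_imp_convergent_prod summable_imp_abs_convergent_prod)
qed

lemma qpoch_LIMSEQ:
  assumes "\<bar>q\<bar> < 1"
  shows "(\<lambda>n. qpoch a q n) \<longlonglongrightarrow> qpoch_inf a q"
  using convergent_prod_LIMSEQ[OF qpoch_inf_convergent_prod[OF assms]]
  by (simp add: qpoch_def qpoch_inf_def LIMSEQ_lessThan_iff_atMost)

lemma qpoch_inf_nonzero: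
  assumes "\<bar>q\<bar> < 1" and "norm a < 1"
  shows "qpoch_inf a q \<noteq> 0"
proof -
  have "norm (a * of_real (q ^ j)) < 1" for j
    using assms by (simp add: norm_mult norm_power mult_le_one power_le_one
      order.strict_trans1[OF mult_right_le_one_le])
  then have "1 - a * of_real (q ^ j) \<noteq> 0" for j
    by (metis eq_iff_diff_eq_0 norm_one less_irrefl)
  then show ?thesis
    using prodinf_nonzero[OF qpoch_inf_convergent_prod[OF assms(1)]] by (simp add: qpoch_inf_def)
qed

lemma one_minus_mult_power_ge:
  fixes a q :: real
  assumes "0 \<le> q" "q \<le> 1"
  shows "min 1 (1 - a) \<le> 1 - a * q ^ n"
proof (cases "a \<le> 0")
  case True
  then have "a * q ^ n \<le> 0" using assms by (simp add: mult_nonpos_nonneg)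
  then show ?thesis by linarith
next
  case False
  then have "a * q ^ n \<le> a" using assms by (simp add: mult_left_le power_le_one)
  then show ?thesis by linarith
qed

definition scaled_pab :: "real \<Rightarrow> real \<Rightarrow> real \<Rightarrow> nat \<Rightarrow> complex \<Rightarrow> complex" where
  "scaled_pab \<alpha> \<beta> q n x = qpoch (of_real \<beta>) q n / qpoch (of_real \<alpha>) q n * pab \<alpha> \<beta> q n x"

lemma scaled_pab_0 [simp]: "scaled_pab \<alpha> \<beta> q 0 x = 1"
  by (simp add: scaled_pab_def qpoch_def)

lemma scaled_pab_1:
  assumes "\<alpha> \<noteq> 1"
  shows "(1 - of_real \<alpha>) * scaled_pab \<alpha> \<beta> q 1 x = x * (1 - of_real \<beta>)"
  using assms by (simp add: scaled_pab_def qpoch_def)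

lemma scaled_pab_Suc_Suc:
  assumes \<alpha>: "\<And>j. \<alpha> * q ^ j \<noteq> 1" and \<beta>: "\<And>j. \<beta> * q ^ j \<noteq> 1"
  shows "of_real (1 - \<alpha> * q ^ Suc n) * (scaled_pab \<alpha> \<beta> q (Suc (Suc n)) x + scaled_pab \<alpha> \<beta> q n x)
    = x * of_real (1 - \<beta> * q ^ Suc n) * scaled_pab \<alpha> \<beta> q (Suc n) x"
proof -
  define a where "a j = (of_real (1 - \<alpha> * q ^ j) :: complex)" for j
  define b where "b j = (of_real (1 - \<beta> * q ^ j) :: complex)" for j
  define r where "r m = qpoch (of_real \<beta>) q m / qpoch (of_real \<alpha>) q m" for m
  have a: "a j \<noteq> 0" and b: "b j \<noteq> 0" for j
    using \<alpha>[of j] \<beta>[of j] by (simp_all add: a_def b_def del: of_real_diff)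
  have r_Suc: "r (Suc m) = r m * b m / a m" for m
    by (simp add: r_def qpoch_Suc a_def b_def)
  have gam: "of_real (gam \<alpha> \<beta> q j) = a j / b j" for j
    by (simp add: gam_def a_def b_def)
  have "a (Suc n) * (r (Suc (Suc n)) * pab \<alpha> \<beta> q (Suc (Suc n)) x + r n * pab \<alpha> \<beta> q n x)
      = r n * b n / a n * b (Suc n) * pab \<alpha> \<beta> q (Suc (Suc n)) x + a (Suc n) * r n * pab \<alpha> \<beta> q n x"
    using a[of "Suc n"] by (simp add: r_Suc field_simps del: pab.simps)
  also have "\<dots> = x * b (Suc n) * (r (Suc n) * pab \<alpha> \<beta> q (Suc n) x)"
    using a b by (simp add: r_Suc gam field_simps)
  finally show ?thesis
    unfolding scaled_pab_def r_def[symmetric] a_def[symmetric] b_def[symmetric] by (simp add: mult_ac)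
qed

lemma le_exp_suminf_if_Suc_le:
  fixes m \<epsilon> :: "nat \<Rightarrow> real"
  assumes \<epsilon>: "\<And>n. 0 \<le> \<epsilon> n" "summable \<epsilon>" and m0: "0 \<le> m 0"
    and m_Suc: "\<And>n. m (Suc n) \<le> (1 + \<epsilon> n) * m n"
  shows "m n \<le> m 0 * exp (suminf \<epsilon>)"
proof -
  have "m n \<le> m 0 * exp (\<Sum>j<n. \<epsilon> j)"
  proof (induction n)
    case (Suc n)
    have "m (Suc n) \<le> (1 + \<epsilon> n) * (m 0 * exp (\<Sum>j<n. \<epsilon> j))"
      using m_Suc[of n] Suc.IH \<epsilon>(1)[of n] by (smt (verit) mult_left_mono)
    also have "\<dots> \<le> exp (\<epsilon> n) * (m 0 * exp (\<Sum>j<n. \<epsilon> j))"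
      using m0 by (intro mult_right_mono exp_ge_add_one_self) auto
    finally show ?case by (simp add: exp_add algebra_simps)
  qed simp
  also have "\<dots> \<le> m 0 * exp (suminf \<epsilon>)"
    using \<epsilon> m0 by (intro mult_left_mono exp_mono sum_le_suminf) auto
  finally show ?thesis .
qed

lemma norm_le_chebyshev_components:
  fixes a b z :: complex
  assumes "z \<noteq> 0" "norm z < 1"
  shows "norm a * norm (1 - z\<^sup>2) \<le> norm (a - z * b) + norm (a - b / z)"
proof -
  have "a * (1 - z\<^sup>2) = (a - z * b) - z\<^sup>2 * (a - b / z)"
    using assms by (simp add: field_simps power2_eq_square)
  then have "norm a * norm (1 - z\<^sup>2) \<le> norm (a - z * b) + norm z ^ 2 * norm (a - b / z)"
    by (metis norm_mult norm_power norm_triangle_ineq4)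
  also have "\<dots> \<le> norm (a - z * b) + norm (a - b / z)"
    using assms by (intro add_left_mono mult_left_le_one_le) (auto simp: power_le_one)
  finally show ?thesis .
qed

lemma perturbed_chebyshev_recurrence_bound:
  fixes P d :: "nat \<Rightarrow> complex" and z :: complex
  assumes z: "z \<noteq> 0" "norm z < 1" and d: "summable (\<lambda>n. norm (d n - 1))"
    and rec: "\<And>n. P (Suc (Suc n)) = (z + 1/z) * d (Suc n) * P (Suc n) - P n"
  obtains B where "\<And>n. norm (P n) * norm z ^ n \<le> B"
proof -
  \<comment> \<open>Without the perturbation (d = 1), u n = u 0 / z ^ n and w n = z ^ n * w 0.\<close>
  define u where "u n = P (Suc n) - z * P n" for n
  define w where "w n = P (Suc n) - P n / z" for n
  define M where "M n = (norm (u n) + norm (w n)) * norm z ^ n" for n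
  define c where "c = norm (1 - z\<^sup>2)"
  define \<epsilon> where "\<epsilon> n = 2 * norm (z + 1/z) * norm z * norm (d (Suc n) - 1) / c" for n
  have "norm (z\<^sup>2) < 1"
    using z by (simp add: norm_power power_less_one_iff abs_square_less_1)
  then have c: "0 < c"
    unfolding c_def by (metis zero_less_norm_iff right_minus_eq norm_one less_irrefl)
  have P_Suc: "norm (P (Suc n)) * norm z ^ n * c \<le> M n" for n
    using mult_right_mono[OF norm_le_chebyshev_components[OF z, of "P (Suc n)" "P n"], of "norm z ^ n"]
    by (simp add: M_def c_def u_def w_def mult_ac)
  have M_Suc: "M (Suc n) \<le> (1 + \<epsilon> n) * M n" for n
  proof -
    define e where "e = (z + 1/z) * (d (Suc n) - 1) * P (Suc n)"
    have "u (Suc n) = u n / z + e" "w (Suc n) = z * w n + e"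
      using z by (simp_all add: u_def w_def e_def rec field_simps)
    then have "M (Suc n) \<le> (norm (u n) / norm z + norm z * norm (w n) + 2 * norm e) * norm z ^ Suc n"
      unfolding M_def using norm_triangle_ineq[of "u n / z" e] norm_triangle_ineq[of "z * w n" e]
      by (intro mult_right_mono) (auto simp: norm_divide norm_mult)
    also have "\<dots> \<le> M n + 2 * norm z * norm e * norm z ^ n"
      using z mult_left_le_one_le[of "norm (w n) * norm z ^ n" "norm z * norm z"]
      by (simp add: M_def field_simps mult_le_one)
    also have "\<dots> = M n + 2 * norm (z + 1/z) * norm z * norm (d (Suc n) - 1) * (norm (P (Suc n)) * norm z ^ n)"
      by (simp add: e_def norm_mult)
    also have "\<dots> \<le> M n + 2 * norm (z + 1/z) * norm z * norm (d (Suc n) - 1) * (M n / c)"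
      using P_Suc[of n] c by (intro add_left_mono mult_left_mono) (simp_all add: pos_le_divide_eq)
    finally show ?thesis by (simp add: \<epsilon>_def algebra_simps)
  qed
  have "summable \<epsilon>"
    unfolding \<epsilon>_def using d summable_Suc_iff[of "\<lambda>n. norm (d n - 1)"] by (intro summable_divide summable_mult) simp
  moreover have "0 \<le> \<epsilon> n" for n
    using c by (simp add: \<epsilon>_def)
  ultimately have M: "M n \<le> M 0 * exp (suminf \<epsilon>)" for n
    by (intro le_exp_suminf_if_Suc_le M_Suc) (simp_all add: M_def)
  have "norm (P n) * norm z ^ n \<le> max (norm (P 0)) (M 0 * exp (suminf \<epsilon>) / c)" for n
  proof (cases n)
    case (Suc k)
    have "norm (P (Suc k)) * norm z ^ Suc k \<le> norm (P (Suc k)) * norm z ^ k"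
      using z by (intro mult_left_mono power_decreasing) auto
    also have "\<dots> \<le> M 0 * exp (suminf \<epsilon>) / c"
      using P_Suc[of k] M[of k] c by (simp add: pos_le_divide_eq)
    finally show ?thesis
      using Suc by simp
  qed simp
  then show ?thesis by (rule that)
qed

lemma unfold_affine_recurrence:
  fixes G D f :: "nat \<Rightarrow> 'a::field"
  assumes D: "\<And>j. D j \<noteq> 0" and rec: "\<And>j. D j * G j = c + f j * G (Suc j)"
  shows "G 0 = (\<Sum>k<K. c * (\<Prod>j<k. f j) / (\<Prod>j<Suc k. D j)) + (\<Prod>j<K. f j / D j) * G K"
proof (induction K)
  case (Suc K)
  have "G K = c / D K + f K / D K * G (Suc K)"
    using D[of K] rec[of K] by (simp add: field_simps)
  then have "(\<Prod>j<K. f j / D j) * G K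
      = c * (\<Prod>j<K. f j) / (\<Prod>j<Suc K. D j) + (\<Prod>j<Suc K. f j / D j) * G (Suc K)"
    by (simp add: prod_dividef algebra_simps)
  then show ?case using Suc.IH by simp
qed simp

lemma LIMSEQ_prod_lessThan_0:
  fixes g :: "nat \<Rightarrow> 'a::{real_normed_field,banach}"
  assumes "g \<longlonglongrightarrow> l" "norm l < 1"
  shows "(\<lambda>K. \<Prod>j<K. g j) \<longlonglongrightarrow> 0"
proof -
  define \<rho> where "\<rho> = (1 + norm l) / 2"
  have "\<rho> < 1" "norm l < \<rho>" using assms(2) by (simp_all add: \<rho>_def)
  have "eventually (\<lambda>j. norm (g j) < \<rho>) sequentially"
    using tendsto_norm[OF assms(1)] \<open>norm l < \<rho>\<close> by (rule order_tendstoD)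
  then obtain N where N: "\<And>j. j \<ge> N \<Longrightarrow> norm (g j) < \<rho>"
    by (auto simp: eventually_sequentially)
  have "summable (\<lambda>K. \<Prod>j<K. g j)"
  proof (rule summable_ratio_test[OF \<open>\<rho> < 1\<close>])
    fix K assume "N \<le> K"
    then show "norm (\<Prod>j<Suc K. g j) \<le> \<rho> * norm (\<Prod>j<K. g j)"
      using N[of K] by (simp add: norm_mult mult.commute mult_right_mono)
  qed
  then show ?thesis by (rule summable_LIMSEQ_zero)
qed

locale pab_generating_function =
  fixes q \<alpha> \<beta> :: real and z :: complex
  assumes q: "0 < q" "q < 1" and \<alpha>: "\<alpha> < 1" and \<beta>: "\<beta> < 1" and z: "z \<noteq> 0" "norm z < 1"
begin

abbreviation P :: "nat \<Rightarrow> complex" where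
  "P n \<equiv> scaled_pab \<alpha> \<beta> q n (z + 1/z)"

definition F :: "complex \<Rightarrow> complex" where
  "F t = (\<Sum>n. P n * t ^ n)"

definition den :: "complex \<Rightarrow> complex" where
  "den t = (1 - z * t) * (1 - t / z)"

definition num :: "complex \<Rightarrow> complex" where
  "num t = of_real (\<alpha> / q) * (1 + of_real (q\<^sup>2) * t\<^sup>2) - of_real \<beta> * (z + 1/z) * t"

lemma one_minus_\<alpha>_pos: "0 < 1 - \<alpha> * q ^ n"
  using one_minus_mult_power_ge[of q \<alpha> n] q \<alpha> by linarith

lemma one_minus_\<beta>_pos: "0 < 1 - \<beta> * q ^ n"
  using one_minus_mult_power_ge[of q \<beta> n] q \<beta> by linarith

lemma P_recurrence:
  "of_real (1 - \<alpha> * q ^ Suc n) * (P (Suc (Suc n)) + P n)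
    = (z + 1/z) * of_real (1 - \<beta> * q ^ Suc n) * P (Suc n)"
  using one_minus_\<alpha>_pos one_minus_\<beta>_pos
  by (intro scaled_pab_Suc_Suc) (metis less_irrefl diff_self)+

lemma P_Suc_Suc:
  "P (Suc (Suc n)) = (z + 1/z) * of_real ((1 - \<beta> * q ^ Suc n) / (1 - \<alpha> * q ^ Suc n)) * P (Suc n) - P n"
proof -
  have "(of_real (1 - \<alpha> * q ^ Suc n) :: complex) \<noteq> 0"
    using one_minus_\<alpha>_pos[of "Suc n"] by (simp del: of_real_diff)
  with P_recurrence[of n] show ?thesis
    by (simp only: of_real_divide) (simp add: field_simps del: of_real_diff)
qed

lemma summable_norm_ratio_minus_1:
  "summable (\<lambda>n. norm (complex_of_real ((1 - \<beta> * q ^ n) / (1 - \<alpha> * q ^ n)) - 1))"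
proof (rule summable_comparison_test)
  show "summable (\<lambda>n. \<bar>\<alpha> - \<beta>\<bar> / min 1 (1 - \<alpha>) * q ^ n)"
    using q by (intro summable_mult summable_geometric) auto
  show "\<exists>N. \<forall>n\<ge>N. norm (norm (complex_of_real ((1 - \<beta> * q ^ n) / (1 - \<alpha> * q ^ n)) - 1))
      \<le> \<bar>\<alpha> - \<beta>\<bar> / min 1 (1 - \<alpha>) * q ^ n"
  proof (intro exI allI impI)
    fix n
    have pos: "0 < 1 - \<alpha> * q ^ n" by (rule one_minus_\<alpha>_pos)
    have "norm (complex_of_real ((1 - \<beta> * q ^ n) / (1 - \<alpha> * q ^ n)) - 1)
        = \<bar>(1 - \<beta> * q ^ n) / (1 - \<alpha> * q ^ n) - 1\<bar>"
      by (metis norm_of_real of_real_1 of_real_diff)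
    also have "(1 - \<beta> * q ^ n) / (1 - \<alpha> * q ^ n) - 1 = (\<alpha> - \<beta>) * q ^ n / (1 - \<alpha> * q ^ n)"
      using pos by (simp add: field_simps)
    also have "\<bar>(\<alpha> - \<beta>) * q ^ n / (1 - \<alpha> * q ^ n)\<bar> = \<bar>\<alpha> - \<beta>\<bar> * q ^ n / (1 - \<alpha> * q ^ n)"
      using pos q by (simp add: abs_mult)
    also have "\<dots> \<le> \<bar>\<alpha> - \<beta>\<bar> * q ^ n / min 1 (1 - \<alpha>)"
      using q \<alpha> one_minus_mult_power_ge[of q \<alpha> n] by (intro divide_left_mono) auto
    finally show "norm (norm (complex_of_real ((1 - \<beta> * q ^ n) / (1 - \<alpha> * q ^ n)) - 1))
      \<le> \<bar>\<alpha> - \<beta>\<bar> / min 1 (1 - \<alpha>) * q ^ n"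
      by simp
  qed
qed

lemma summable_P_series:
  assumes "norm t < norm z"
  shows "summable (\<lambda>n. norm (P n * t ^ n))"
proof -
  obtain B where B: "\<And>n. norm (P n) * norm z ^ n \<le> B"
    using perturbed_chebyshev_recurrence_bound[OF z summable_norm_ratio_minus_1, where P = P]
      P_Suc_Suc by blast
  show ?thesis
  proof (rule summable_comparison_test)
    show "summable (\<lambda>n. B * (norm t / norm z) ^ n)"
      using assms z by (intro summable_mult summable_geometric) auto
    have "norm (P n) * norm z ^ n * (norm t / norm z) ^ n \<le> B * (norm t / norm z) ^ n" for n
      by (intro mult_right_mono B) auto
    then show "\<exists>N. \<forall>n\<ge>N. norm (norm (P n * t ^ n)) \<le> B * (norm t / norm z) ^ n"
      using z by (simp add: norm_mult norm_power power_divide)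
  qed
qed

lemma P_series_sums: "norm t < norm z \<Longrightarrow> (\<lambda>n. P n * t ^ n) sums F t"
  unfolding F_def by (rule summable_sums, rule summable_norm_cancel, rule summable_P_series)

lemma F_tendsto_1:
  assumes "s \<longlonglongrightarrow> 0"
  shows "(\<lambda>n. F (s n)) \<longlonglongrightarrow> 1"
proof -
  have "summable (\<lambda>n. P n * of_real (norm z / 2) ^ n)"
    using z by (intro summable_norm_cancel[OF summable_P_series]) auto
  then have "isCont (\<lambda>t. \<Sum>n. P n * t ^ n) 0"
    by (rule isCont_powser) (use z in auto)
  then show ?thesis
    using isCont_tendsto_compose[OF _ assms] by (force simp: F_def[abs_def])
qed

lemma norm_qpow_mult_less:
  fixes t :: complex
  assumes "norm t < norm z"
  shows "norm (of_real q ^ j * t) < norm z"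
proof -
  have "norm (of_real q ^ j * t) = q ^ j * norm t"
    using q by (simp add: norm_mult norm_power)
  also have "\<dots> \<le> norm t"
    using q by (intro mult_left_le_one_le) (auto simp: power_le_one)
  finally show ?thesis using assms by simp
qed

lemma weighted_P_series_sums:
  assumes t: "norm t < norm z"
  shows "(\<lambda>n. (1 - \<kappa> * of_real q ^ n) * P n * t ^ n) sums (F t - \<kappa> * F (of_real q * t))"
proof -
  have "norm (of_real q * t) < norm z"
    using norm_qpow_mult_less[OF t, of 1] by simp
  then show ?thesis
    using sums_diff[OF P_series_sums[OF t] sums_mult[OF P_series_sums, of "of_real q * t" \<kappa>]]
    by (simp add: algebra_simps)
qed

lemma F_shifted_series_identity:
  assumes t: "norm t < norm z"
  defines "c \<equiv> complex_of_real (\<alpha> / q)" and "x \<equiv> z + 1/z" and "Fq \<equiv> F (of_real q * t)"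
  shows "(F t - c * Fq - (1 - c) - (1 - c * of_real q) * P 1 * t)
      - x * t * (F t - of_real \<beta> * Fq - (1 - of_real \<beta>)) + t\<^sup>2 * (F t - c * of_real q ^ 2 * Fq) = 0"
proof -
  have "(\<lambda>n. (1 - c * of_real q ^ (n + 2)) * P (n + 2) * t ^ (n + 2))
      sums (F t - c * Fq - (1 - c) - (1 - c * of_real q) * P 1 * t)"
    using sums_split_initial_segment[OF weighted_P_series_sums[OF t, of c], of 2]
    by (simp add: Fq_def numeral_2_eq_2 algebra_simps)
  moreover have "(\<lambda>n. (1 - of_real \<beta> * of_real q ^ (n + 1)) * P (n + 1) * t ^ (n + 1))
      sums (F t - of_real \<beta> * Fq - (1 - of_real \<beta>))"
    using sums_split_initial_segment[OF weighted_P_series_sums[OF t, of "of_real \<beta>"], of 1]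
    by (simp add: Fq_def)
  moreover have "(\<lambda>n. (1 - c * of_real q ^ 2 * of_real q ^ n) * P n * t ^ n)
      sums (F t - c * of_real q ^ 2 * Fq)"
    using weighted_P_series_sums[OF t, of "c * of_real q ^ 2"] by (simp add: Fq_def)
  ultimately have "(\<lambda>n. (1 - c * of_real q ^ (n + 2)) * P (n + 2) * t ^ (n + 2)
        - x * t * ((1 - of_real \<beta> * of_real q ^ (n + 1)) * P (n + 1) * t ^ (n + 1))
        + t\<^sup>2 * ((1 - c * of_real q ^ 2 * of_real q ^ n) * P n * t ^ n))
      sums ((F t - c * Fq - (1 - c) - (1 - c * of_real q) * P 1 * t)
        - x * t * (F t - of_real \<beta> * Fq - (1 - of_real \<beta>)) + t\<^sup>2 * (F t - c * of_real q ^ 2 * Fq))"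
    by (intro sums_add sums_diff sums_mult)
  moreover have "(1 - c * of_real q ^ (n + 2)) * P (n + 2) * t ^ (n + 2)
        - x * t * ((1 - of_real \<beta> * of_real q ^ (n + 1)) * P (n + 1) * t ^ (n + 1))
        + t\<^sup>2 * ((1 - c * of_real q ^ 2 * of_real q ^ n) * P n * t ^ n) = 0" for n
  proof -
    have "c * of_real q ^ 2 * of_real q ^ n = c * of_real q ^ Suc (Suc n)"
      by (simp add: power2_eq_square mult_ac)
    moreover have "c * of_real q ^ Suc (Suc n) = of_real (\<alpha> * q ^ Suc n)"
      using q by (simp add: c_def)
    ultimately have coeffs: "1 - c * of_real q ^ (n + 2) = of_real (1 - \<alpha> * q ^ Suc n)"
      "1 - c * of_real q ^ 2 * of_real q ^ n = of_real (1 - \<alpha> * q ^ Suc n)"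
      "1 - of_real \<beta> * of_real q ^ (n + 1) = of_real (1 - \<beta> * q ^ Suc n)"
      by (simp_all del: power_Suc)
    have rec: "of_real (1 - \<alpha> * q ^ Suc n) * (P (Suc (Suc n)) + P n)
        - x * of_real (1 - \<beta> * q ^ Suc n) * P (Suc n) = 0"
      by (simp only: x_def P_recurrence diff_self)
    show ?thesis
      unfolding coeffs using arg_cong[OF rec, of "\<lambda>r. t ^ (n + 2) * r"]
      by (simp add: power_add power2_eq_square algebra_simps del: of_real_diff)
  qed
  ultimately show ?thesis
    by (simp add: sums_iff)
qed

lemma F_functional_equation:
  assumes t: "norm t < norm z"
  shows "den t * F t = (1 - of_real (\<alpha> / q)) + num t * F (of_real q * t)"
proof -
  define c where "c = complex_of_real (\<alpha> / q)"
  define Fq where "Fq = F (of_real q * t)"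
  have "(1 - c * of_real q) * P 1 = (z + 1/z) * (1 - of_real \<beta>)"
    using scaled_pab_1[of \<alpha> \<beta> q "z + 1/z"] \<alpha> q by (simp add: c_def)
  then have identity: "(F t - c * Fq - (1 - c) - (z + 1/z) * (1 - of_real \<beta>) * t)
      - (z + 1/z) * t * (F t - of_real \<beta> * Fq - (1 - of_real \<beta>))
      + t\<^sup>2 * (F t - c * of_real q ^ 2 * Fq) = 0"
    using F_shifted_series_identity[OF t, folded c_def Fq_def] by simp
  have den: "den t = 1 - (z + 1/z) * t + t\<^sup>2"
    using z by (simp add: den_def field_simps power2_eq_square)
  have num: "num t = c * (1 + of_real q ^ 2 * t\<^sup>2) - of_real \<beta> * (z + 1/z) * t"
    by (simp add: num_def c_def)
  have "den t * F t - ((1 - c) + num t * Fq)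
      = (F t - c * Fq - (1 - c) - (z + 1/z) * (1 - of_real \<beta>) * t)
        - (z + 1/z) * t * (F t - of_real \<beta> * Fq - (1 - of_real \<beta>))
        + t\<^sup>2 * (F t - c * of_real q ^ 2 * Fq)"
    unfolding den num by (simp add: algebra_simps)
  also have "\<dots> = 0"
    by (rule identity)
  finally show ?thesis
    by (simp add: c_def Fq_def)
qed

lemma qpow_mult_LIMSEQ_0:
  fixes t :: complex
  shows "(\<lambda>j. of_real q ^ j * t) \<longlonglongrightarrow> 0"
proof -
  have "(\<lambda>j. of_real q ^ j * t) \<longlonglongrightarrow> 0 * t"
    using q by (intro tendsto_mult tendsto_const LIMSEQ_power_zero) simp
  then show ?thesis by simp
qed

lemma den_nonzero:
  assumes "norm s < norm z"
  shows "den s \<noteq> 0"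
proof -
  have "norm (z * s) < 1"
    using assms z mult_strict_mono[of "norm z" 1 "norm s" 1] by (simp add: norm_mult)
  moreover have "norm (s / z) < 1"
    using assms z by (simp add: norm_divide)
  ultimately show ?thesis
    unfolding den_def by (metis mult_eq_0_iff norm_one right_minus_eq less_irrefl)
qed

lemma F_unfold:
  assumes t: "norm t < norm z"
  shows "F t = (\<Sum>k<K. (1 - of_real (\<alpha> / q)) * (\<Prod>j<k. num (of_real q ^ j * t))
                       / (\<Prod>j<Suc k. den (of_real q ^ j * t)))
             + (\<Prod>j<K. num (of_real q ^ j * t) / den (of_real q ^ j * t)) * F (of_real q ^ K * t)"
proof -
  have "den (of_real q ^ j * t) * F (of_real q ^ j * t)
      = (1 - of_real (\<alpha> / q)) + num (of_real q ^ j * t) * F (of_real q ^ Suc j * t)" for j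
    using F_functional_equation[OF norm_qpow_mult_less[OF t]] by (simp add: mult.assoc)
  then show ?thesis
    using unfold_affine_recurrence[of "\<lambda>j. den (of_real q ^ j * t)" "\<lambda>j. F (of_real q ^ j * t)"]
      den_nonzero[OF norm_qpow_mult_less[OF t]] by simp
qed

lemma num_div_den_LIMSEQ:
  "(\<lambda>j. num (of_real q ^ j * t) / den (of_real q ^ j * t)) \<longlonglongrightarrow> of_real (\<alpha> / q)"
proof -
  have "((\<lambda>s. num s / den s) \<longlongrightarrow> num 0 / den 0) (at 0)"
    unfolding num_def den_def using z by (intro tendsto_intros) auto
  then have "isCont (\<lambda>s. num s / den s) 0"
    by (simp add: isCont_def)
  then show ?thesis
    using isCont_tendsto_compose[OF _ qpow_mult_LIMSEQ_0] by (force simp: num_def den_def)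
qed

lemma F_series_expansion:
  assumes \<alpha>q: "\<bar>\<alpha>\<bar> < q" and t: "norm t < norm z"
  shows "(\<lambda>k. (1 - of_real (\<alpha> / q)) * (\<Prod>j<k. num (of_real q ^ j * t))
                / (\<Prod>j<Suc k. den (of_real q ^ j * t))) sums F t"
proof -
  have "norm (complex_of_real (\<alpha> / q)) < 1"
    unfolding norm_of_real using \<alpha>q q by (simp add: abs_divide)
  then have "(\<lambda>K. (\<Prod>j<K. num (of_real q ^ j * t) / den (of_real q ^ j * t)) * F (of_real q ^ K * t))
      \<longlonglongrightarrow> 0 * 1"
    by (intro tendsto_mult LIMSEQ_prod_lessThan_0[OF num_div_den_LIMSEQ] F_tendsto_1 qpow_mult_LIMSEQ_0)
  then have "(\<lambda>K. F t - (\<Prod>j<K. num (of_real q ^ j * t) / den (of_real q ^ j * t)) * F (of_real q ^ K * t))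
      \<longlonglongrightarrow> F t"
    using tendsto_diff[OF tendsto_const] by fastforce
  moreover have "F t - (\<Prod>j<K. num (of_real q ^ j * t) / den (of_real q ^ j * t)) * F (of_real q ^ K * t)
      = (\<Sum>k<K. (1 - of_real (\<alpha> / q)) * (\<Prod>j<k. num (of_real q ^ j * t))
                / (\<Prod>j<Suc k. den (of_real q ^ j * t)))" for K
    by (subst F_unfold[OF t, of K]) simp
  ultimately show ?thesis
    unfolding sums_def by simp
qed

lemma F_product_formula:
  assumes \<alpha>q: "\<alpha> = q" and t: "norm t < norm z"
  shows "F t = (\<Prod>j<K. num (of_real q ^ j * t) / den (of_real q ^ j * t)) * F (of_real q ^ K * t)"
  using F_unfold[OF t, of K] \<alpha>q q by simp

lemma prod_den_qpoch: "(\<Prod>j<K. den (of_real q ^ j * s)) = qpoch (z * s) q K * qpoch (s / z) q K"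
  unfolding qpoch_def den_def prod.distrib[symmetric]
  by (intro prod.cong) (simp_all add: algebra_simps)

lemma tau_poch_eq_prod_num: "tau_poch \<alpha> \<beta> q z t k = (\<Prod>j<k. num (of_real q ^ j * t))"
  unfolding tau_poch_def num_def using q
  by (intro prod.cong) (simp_all add: power_add power_mult_distrib power_mult power2_eq_square field_simps)

lemma F_eq_phi32:
  assumes \<alpha>q: "\<bar>\<alpha>\<bar> < q" and t: "norm t < norm z"
  shows "F t = (1 - of_real (\<alpha> / q)) / ((1 - z * t) * (1 - t / z)) * phi32_tau \<alpha> \<beta> q z t"
proof -
  define C where "C = (1 - complex_of_real (\<alpha> / q)) / den t"
  define \<phi> where "\<phi> k = qpoch (of_real q) q k * tau_poch \<alpha> \<beta> q z t k
      / (qpoch (of_real q * z * t) q k * qpoch (of_real q * t / z) q k * qpoch (of_real q) q k)" for k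
  have "\<alpha> \<noteq> q" using \<alpha>q by auto
  with den_nonzero[OF t] q have "C \<noteq> 0"
    by (simp add: C_def)
  have "complex_of_real (1 - q * q ^ j) \<noteq> 0" for j
    using one_minus_mult_power_ge[of q q j] q by (simp only: of_real_eq_0_iff) linarith
  then have "qpoch (of_real q) q k \<noteq> 0" for k
    by (simp add: qpoch_def)
  then have "(1 - of_real (\<alpha> / q)) * (\<Prod>j<k. num (of_real q ^ j * t)) / (\<Prod>j<Suc k. den (of_real q ^ j * t))
      = C * \<phi> k" for k
    unfolding prod.lessThan_Suc_shift using prod_den_qpoch[where K = k and s = "of_real q * t"]
    by (simp add: C_def \<phi>_def tau_poch_eq_prod_num mult_ac)
  then have "(\<lambda>k. C * \<phi> k) sums F t"
    using F_series_expansion[OF \<alpha>q t] by simp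
  then have "\<phi> sums (F t / C)"
    using sums_divide[of "\<lambda>k. C * \<phi> k" "F t" C] \<open>C \<noteq> 0\<close> by simp
  then have "F t = C * phi32_tau \<alpha> \<beta> q z t"
    using \<open>C \<noteq> 0\<close> unfolding phi32_tau_def \<phi>_def[symmetric] by (simp add: sums_iff)
  then show ?thesis
    by (simp add: C_def den_def)
qed

lemma F_eq_qpoch_inf_ratio:
  assumes \<alpha>q: "\<alpha> = q" and t: "norm t < norm z"
    and \<tau>: "\<tau> \<noteq> 0" "of_real q * (\<tau> + 1/\<tau>) = of_real \<beta> * (z + 1/z)"
  shows "F t = qpoch_inf (of_real q * \<tau> * t) q * qpoch_inf (of_real q * t / \<tau>) q
               / (qpoch_inf (z * t) q * qpoch_inf (t / z) q)"
    (is "_ = ?L")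
proof -
  have num: "num s = (1 - of_real q * \<tau> * s) * (1 - of_real q * s / \<tau>)" for s
  proof -
    have "num s = of_real (\<alpha> / q) * (1 + of_real (q\<^sup>2) * s\<^sup>2) - of_real q * (\<tau> + 1/\<tau>) * s"
      unfolding num_def \<tau>(2) ..
    then show ?thesis
      using \<tau>(1) q by (simp add: \<alpha>q field_simps power2_eq_square)
  qed
  have "norm (z * t) < 1" "norm (t / z) < 1"
    using t z mult_strict_mono[of "norm z" 1 "norm t" 1] by (simp_all add: norm_mult norm_divide)
  then have "qpoch_inf (z * t) q * qpoch_inf (t / z) q \<noteq> 0"
    using q by (simp add: qpoch_inf_nonzero)
  moreover have "(\<Prod>j<K. num (of_real q ^ j * t) / den (of_real q ^ j * t))
      = qpoch (of_real q * \<tau> * t) q K * qpoch (of_real q * t / \<tau>) q K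
        / (qpoch (z * t) q K * qpoch (t / z) q K)" for K
    unfolding prod_dividef prod_den_qpoch num by (simp add: qpoch_def prod.distrib mult_ac)
  ultimately have "(\<lambda>K. (\<Prod>j<K. num (of_real q ^ j * t) / den (of_real q ^ j * t)) * F (of_real q ^ K * t))
      \<longlonglongrightarrow> ?L * 1"
    using q by (simp only:) (intro tendsto_intros qpoch_LIMSEQ F_tendsto_1 qpow_mult_LIMSEQ_0; simp)
  then show ?thesis
    using F_product_formula[OF \<alpha>q t] LIMSEQ_const_iff by fastforce
qed

lemma pab_series_sums_phi32:
  assumes "\<bar>\<alpha>\<bar> < q" "norm t < norm z"
  shows "(\<lambda>n. qpoch (of_real \<beta>) q n / qpoch (of_real \<alpha>) q n * pab \<alpha> \<beta> q n (z + 1/z) * t ^ n)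
           sums ((1 - of_real (\<alpha> / q)) / ((1 - z * t) * (1 - t / z)) * phi32_tau \<alpha> \<beta> q z t)"
  using P_series_sums[OF assms(2)] unfolding F_eq_phi32[OF assms] scaled_pab_def .

lemma pab_series_sums_qpoch_inf_ratio:
  assumes "\<alpha> = q" "norm t < norm z" "\<tau> \<noteq> 0" "of_real q * (\<tau> + 1/\<tau>) = of_real \<beta> * (z + 1/z)"
  shows "(\<lambda>n. qpoch (of_real \<beta>) q n / qpoch (of_real \<alpha>) q n * pab \<alpha> \<beta> q n (z + 1/z) * t ^ n)
           sums (qpoch_inf (of_real q * \<tau> * t) q * qpoch_inf (of_real q * t / \<tau>) q
                 / (qpoch_inf (z * t) q * qpoch_inf (t / z) q))"
  using P_series_sums[OF assms(2)] unfolding F_eq_qpoch_inf_ratio[OF assms] scaled_pab_def .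

end

theorem theorem2p16:
  fixes q \<alpha> \<beta> :: real and t z :: complex
  assumes q: "0 < q" "q < 1"
    and \<beta>: "\<beta> < 1"
    and tz: "cmod t < cmod z" "cmod z < 1"
  shows "(\<bar>\<alpha>\<bar> < q \<longrightarrow>
           (\<lambda>n. qpoch (of_real \<beta>) q n / qpoch (of_real \<alpha>) q n
                 * pab \<alpha> \<beta> q n (z + 1/z) * t ^ n)
           sums ((1 - of_real (\<alpha> / q)) / ((1 - z * t) * (1 - t / z)) * phi32_tau \<alpha> \<beta> q z t))
       \<and> (\<forall>\<tau>::complex. \<tau> \<noteq> 0 \<longrightarrow> of_real q * (\<tau> + 1/\<tau>) = of_real \<beta> * (z + 1/z) \<longrightarrow>
           (\<lambda>n. qpoch (of_real \<beta>) q n / qpoch (of_real q) q n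
                 * pab q \<beta> q n (z + 1/z) * t ^ n)
           sums (qpoch_inf (of_real q * \<tau> * t) q * qpoch_inf (of_real q * t / \<tau>) q
                 / (qpoch_inf (z * t) q * qpoch_inf (t / z) q)))"
proof -
  have setting: "pab_generating_function q a \<beta> z" if "a < 1" for a
    using q \<beta> tz that by unfold_locales auto
  show ?thesis
    using pab_generating_function.pab_series_sums_phi32[OF setting _ tz(1), of \<alpha>]
      pab_generating_function.pab_series_sums_qpoch_inf_ratio[OF setting[OF q(2)] refl tz(1)] q
    by auto
qed

end
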